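(* Let $(L,\wedge,\vee,0,1)$ be a bounded lattice with additive Nakano mosaic $(L,\boxplus,0)$, where $x\boxplus y:=\{z\in L\mid x\vee y=x\vee z=z\vee y\}$. For $x,y,z\in L$, we have $z=x\vee y$ if and only if $x,y\in z\boxplus z$ and $z\in x\boxplus y$. *)

theory Defs
  imports Main
begin

definition nakano_add :: "'a::bounded_lattice \<Rightarrow> 'a \<Rightarrow> 'a set" where
  "nakano_add x y = {z. sup x y = sup x z \<and> sup x z = sup z y}"

end

theory Submission
  imports Defs
begin

lemma nakano_add_self: "nakano_add z z = {..z}"
  by (auto simp: nakano_add_def sup.absorb1 sup.absorb_iff1 sup_commute)

lemma upper_mem_nakano_add_iff:
  assumes "x \<le> z"
  shows "z \<in> nakano_add x y \<longleftrightarrow> z = sup x y"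
  using assms by (auto simp: nakano_add_def sup.absorb2 sup_absorb1)

theorem mainTheorem17:
  fixes x y z :: "'a::bounded_lattice"
  shows "z = sup x y \<longleftrightarrow>
         (x \<in> nakano_add z z \<and> y \<in> nakano_add z z \<and> z \<in> nakano_add x y)"
  using upper_mem_nakano_add_iff [of x z y] by (auto simp: nakano_add_self)

end
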